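(* There is an absolute constant $C>0$ such that, for diffusive deposition and every configuration $\sigma\in\mathbb N^N$ with $|\sigma|<N/2$, $$P_g(\sigma)\ge\exp\Big(-\frac1N\Big(\sum_{j=1}^N\sigma_j(\sigma_j+1)\Big)\Big(1+C\frac{|\sigma|}{N}\Big)\Big).$$
   Context: Diffusive deposition: for $N\ge2$, $G_N=\{1,\dots,N\}$, a configuration $\sigma\in\mathbb N^N$ gives column heights, $|\sigma|=\sum_i\sigma_i$. Given $\sigma$, an explorer is a walk $(X_n,Z_n)_{n\ge0}$ with $(X_n)$ i.i.d. uniform on $G_N$, $Z_0=\max_i\sigma_i+1$, and $(Z_{n+1}-Z_n)$ i.i.d. uniform on $\{-1,1\}$ independent of $(X_n)$. With $n^*=\inf\{n:Z_n\le\sigma_{X_n}\}$, the hitting site is $(X_{n^*},Z_{n^*})$ and the explorer attaches to column $X_{n^*}$. The explorer hits the ground if $Z_{n^*}=0$; $P_g(\sigma)$ denotes the probability of this event. *)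

theory Defs
  imports "HOL-Probability.Probability"
begin

text \<open>Sites are G_N = {1..N}; a configuration is sigma :: nat => nat, only its values
on {1..N} matter. One step of the explorer draws a pair (X_n, Z_{n+1} - Z_n) with
X_n uniform on {1..N} and the increment uniform on {-1,1}, independently.\<close>

definition step_pmf :: "nat \<Rightarrow> (nat \<times> int) pmf" where
  "step_pmf N = pair_pmf (pmf_of_set {1..N}) (pmf_of_set {-1, 1})"

definition explorer_space :: "nat \<Rightarrow> (nat \<times> int) stream measure" where
  "explorer_space N = stream_space (measure_pmf (step_pmf N))"

definition conf_size :: "nat \<Rightarrow> (nat \<Rightarrow> nat) \<Rightarrow> nat" where
  "conf_size N \<sigma> = (\<Sum>i=1..N. \<sigma> i)"

definition conf_max :: "nat \<Rightarrow> (nat \<Rightarrow> nat) \<Rightarrow> nat" where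
  "conf_max N \<sigma> = Max (\<sigma> ` {1..N})"

definition expl_X :: "(nat \<times> int) stream \<Rightarrow> nat \<Rightarrow> nat" where
  "expl_X s n = fst (s !! n)"

definition expl_Z :: "nat \<Rightarrow> (nat \<Rightarrow> nat) \<Rightarrow> (nat \<times> int) stream \<Rightarrow> nat \<Rightarrow> int" where
  "expl_Z N \<sigma> s n = int (conf_max N \<sigma>) + 1 + (\<Sum>k<n. snd (s !! k))"

definition hits_ground :: "nat \<Rightarrow> (nat \<Rightarrow> nat) \<Rightarrow> (nat \<times> int) stream \<Rightarrow> bool" where
  "hits_ground N \<sigma> s \<longleftrightarrow>
     (\<exists>n. expl_Z N \<sigma> s n \<le> int (\<sigma> (expl_X s n))
        \<and> (\<forall>k<n. expl_Z N \<sigma> s k > int (\<sigma> (expl_X s k)))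
        \<and> expl_Z N \<sigma> s n = 0)"

definition P_g :: "nat \<Rightarrow> (nat \<Rightarrow> nat) \<Rightarrow> real" where
  "P_g N \<sigma> = measure (explorer_space N) {s \<in> space (explorer_space N). hits_ground N \<sigma> s}"

end

theory Submission
  imports Defs
begin

text \<open>Let \<open>P n\<close> be the probability that an explorer started at height \<open>n\<close> reaches the
ground. Conditioning on the first step gives \<open>P 0 = 1\<close> and
\<open>P (n+1) = (1 - a n) (P n + P (n+2)) / 2\<close>, where \<open>a n = #{i. n < \<sigma> i} / N\<close> is the chance
of landing on a column that reaches height \<open>n+1\<close>. Above the height \<open>h\<close> of the highest column
\<open>a\<close> vanishes, and a bounded harmonic sequence is constant there. Backward induction from the
top then gives
\<open>P z \<le> (1 + E z) P (z+1)\<close> with \<open>E z = \<Sum>w\<ge>z. 2 a w / (1 - a w)\<close>, so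
\<open>1 \<le> (\<Prod>z. 1 + E z) P (h+1) \<le> exp (\<Sum>w. 2 (w+1) a w / (1 - a w)) P (h+1)\<close>.
Finally \<open>a w \<le> |\<sigma>|/N < 1/2\<close> gives \<open>a w / (1 - a w) \<le> a w (1 + 2|\<sigma>|/N)\<close>, and
\<open>\<Sum>w. 2 (w+1) #{i. w < \<sigma> i} = \<Sum>j. \<sigma> j (\<sigma> j + 1)\<close>; hence the bound with \<open>C = 2\<close>.\<close>

section \<open>Killed simple random walks\<close>

lemma sum_upper_tails:
  fixes f :: "nat \<Rightarrow> real"
  shows "(\<Sum>z<n. \<Sum>w\<in>{z..<n}. f w) = (\<Sum>w<n. (real w + 1) * f w)"
proof (induction n)
  case (Suc n)
  have "(\<Sum>z<Suc n. \<Sum>w\<in>{z..<Suc n}. f w) = (\<Sum>z<n. (\<Sum>w\<in>{z..<n}. f w) + f n) + f n"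
    by (simp add: sum.distrib algebra_simps)
  also have "\<dots> = (\<Sum>w<n. (real w + 1) * f w) + real n * f n + f n"
    using Suc by (simp add: sum.distrib algebra_simps)
  finally show ?case by (simp add: algebra_simps)
qed simp

lemma bounded_harmonic_tail_const:
  fixes P :: "nat \<Rightarrow> real"
  assumes bounded: "\<And>n. \<bar>P n\<bar> \<le> B"
    and harmonic: "\<And>n. h \<le> n \<Longrightarrow> P (Suc n) = (P n + P (Suc (Suc n))) / 2"
  shows "P (Suc h) = P h"
proof (rule ccontr)
  define d where "d = P (Suc h) - P h"
  assume "P (Suc h) \<noteq> P h"
  then have "d \<noteq> 0" by (simp add: d_def)
  have increment: "P (Suc (h + m)) - P (h + m) = d" for m
  proof (induction m)
    case (Suc m)
    then show ?case using harmonic[of "h + m"] by (simp add: algebra_simps)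
  qed (simp add: d_def)
  have linear: "P (h + m) = P h + real m * d" for m
    by (induction m) (use increment in \<open>auto simp: algebra_simps\<close>)
  obtain m :: nat where "2 * B / \<bar>d\<bar> < real m"
    using reals_Archimedean2 by blast
  then have "2 * B < real m * \<bar>d\<bar>"
    using \<open>d \<noteq> 0\<close> by (simp add: field_simps)
  moreover have "\<bar>real m * d\<bar> \<le> 2 * B"
    using linear[of m] bounded[of h] bounded[of "h + m"] by linarith
  ultimately show False by (simp add: abs_mult)
qed

lemma absorption_ratio_bound:
  fixes P a :: "nat \<Rightarrow> real"
  assumes nonneg: "\<And>n. 0 \<le> P n"
    and rec: "\<And>n. P (Suc n) = (1 - a n) * ((P n + P (Suc (Suc n))) / 2)"
    and a_lt_1: "\<And>n. a n < 1"
    and flat: "P (Suc h) = P h"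
    and "z \<le> h"
  shows "P z \<le> (1 + (\<Sum>w\<in>{z..<h}. 2 * (a w / (1 - a w)))) * P (Suc z)"
  using \<open>z \<le> h\<close>
proof (induction z rule: inc_induct)
  case base
  then show ?case using flat by simp
next
  case (step n)
  define E where "E = (\<Sum>w\<in>{Suc n..<h}. 2 * (a w / (1 - a w)))"
  have IH: "P (Suc n) \<le> (1 + E) * P (Suc (Suc n))"
    using step.IH by (simp add: E_def)
  have next_lower: "(1 - E) * P (Suc n) \<le> P (Suc (Suc n))"
  proof (cases "E \<le> 1")
    case True
    have "(1 - E) * P (Suc n) \<le> (1 - E) * ((1 + E) * P (Suc (Suc n)))"
      using IH True by (intro mult_left_mono) auto
    also have "\<dots> = P (Suc (Suc n)) - E\<^sup>2 * P (Suc (Suc n))"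
      by (simp add: algebra_simps power2_eq_square)
    also have "\<dots> \<le> P (Suc (Suc n))"
      using nonneg by simp
    finally show ?thesis .
  next
    case False
    then have "(1 - E) * P (Suc n) \<le> 0"
      using nonneg by (intro mult_nonpos_nonneg) auto
    then show ?thesis using nonneg[of "Suc (Suc n)"] by linarith
  qed
  have "1 - a n > 0" using a_lt_1[of n] by simp
  then have "P n = (2 + 2 * (a n / (1 - a n))) * P (Suc n) - P (Suc (Suc n))"
    using rec[of n] by (simp add: field_simps)
  also have "\<dots> \<le> (2 + 2 * (a n / (1 - a n))) * P (Suc n) - (1 - E) * P (Suc n)"
    using next_lower by simp
  also have "\<dots> = (1 + (\<Sum>w\<in>{n..<h}. 2 * (a w / (1 - a w)))) * P (Suc n)"
    using step.hyps by (simp add: E_def sum.atLeast_Suc_lessThan algebra_simps)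
  finally show ?case .
qed

lemma absorption_prob_lower_bound:
  fixes P a :: "nat \<Rightarrow> real"
  assumes bounds: "\<And>n. 0 \<le> P n \<and> P n \<le> 1"
    and P_0: "P 0 = 1"
    and rec: "\<And>n. P (Suc n) = (1 - a n) * ((P n + P (Suc (Suc n))) / 2)"
    and a_bounds: "\<And>n. 0 \<le> a n \<and> a n < 1"
    and vanish: "\<And>n. h \<le> n \<Longrightarrow> a n = 0"
  shows "exp (- (\<Sum>w<h. 2 * (real w + 1) * (a w / (1 - a w)))) \<le> P (Suc h)"
proof -
  define E where "E z = (\<Sum>w\<in>{z..<h}. 2 * (a w / (1 - a w)))" for z
  have ratio_nonneg: "0 \<le> a w / (1 - a w)" for w
    using a_bounds[of w] by (intro divide_nonneg_pos) auto
  have E_nonneg: "0 \<le> E z" for z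
    unfolding E_def by (intro sum_nonneg mult_nonneg_nonneg) (simp_all add: ratio_nonneg)
  have flat: "P (Suc h) = P h"
    by (rule bounded_harmonic_tail_const[where B = 1]) (use bounds rec vanish in auto)
  have ratio: "P z \<le> (1 + E z) * P (Suc z)" if "z \<le> h" for z
    unfolding E_def by (rule absorption_ratio_bound[OF _ rec _ flat that]) (use bounds a_bounds in auto)
  have telescope: "1 \<le> (\<Prod>z<m. 1 + E z) * P m" if "m \<le> Suc h" for m
    using that
  proof (induction m)
    case (Suc m)
    have "1 \<le> (\<Prod>z<m. 1 + E z) * P m"
      using Suc by simp
    also have "\<dots> \<le> (\<Prod>z<m. 1 + E z) * ((1 + E m) * P (Suc m))"
      using ratio[of m] Suc.prems E_nonneg by (intro mult_left_mono prod_nonneg) (auto intro: add_nonneg_nonneg)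
    finally show ?case by (simp add: mult_ac)
  qed (simp add: P_0)
  have "(\<Prod>z<Suc h. 1 + E z) \<le> (\<Prod>z<Suc h. exp (E z))"
    by (intro prod_mono conjI add_nonneg_nonneg exp_ge_add_one_self) (simp_all add: E_nonneg)
  also have "\<dots> = exp (\<Sum>z<h. E z)"
    by (simp add: exp_sum E_def)
  also have "(\<Sum>z<h. E z) = (\<Sum>w<h. 2 * (real w + 1) * (a w / (1 - a w)))"
    unfolding E_def sum_upper_tails by (simp add: mult_ac)
  finally have prod_le_exp: "(\<Prod>z<Suc h. 1 + E z) \<le> exp (\<Sum>w<h. 2 * (real w + 1) * (a w / (1 - a w)))" .
  have "1 \<le> (\<Prod>z<Suc h. 1 + E z) * P (Suc h)"
    by (rule telescope) simp
  also have "\<dots> \<le> exp (\<Sum>w<h. 2 * (real w + 1) * (a w / (1 - a w))) * P (Suc h)"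
    using prod_le_exp bounds[of "Suc h"] by (intro mult_right_mono) auto
  finally have "1 \<le> exp (\<Sum>w<h. 2 * (real w + 1) * (a w / (1 - a w))) * P (Suc h)" .
  then show ?thesis
    by (simp add: exp_minus field_simps)
qed

lemma divide_one_minus_le:
  fixes a t :: real
  assumes "0 \<le> a" "a \<le> t" "2 * t < 1"
  shows "a / (1 - a) \<le> a * (1 + 2 * t)"
proof -
  have "a * (1 + 2 * t) \<le> a * 2"
    using assms by (intro mult_left_mono) auto
  then have "0 \<le> a * (2 * t - a * (1 + 2 * t))"
    using assms by (intro mult_nonneg_nonneg) auto
  also have "\<dots> = a * (1 + 2 * t) * (1 - a) - a"
    by (simp add: algebra_simps)
  finally show ?thesis
    using assms by (simp add: pos_divide_le_eq)
qed

section \<open>Column heights\<close>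

definition taller_columns :: "nat \<Rightarrow> (nat \<Rightarrow> nat) \<Rightarrow> nat \<Rightarrow> nat" where
  "taller_columns N \<sigma> w = card {i \<in> {1..N}. w < \<sigma> i}"

lemma le_conf_max: "i \<in> {1..N} \<Longrightarrow> \<sigma> i \<le> conf_max N \<sigma>"
  unfolding conf_max_def by (rule Max_ge) auto

lemma taller_columns_eq_0:
  assumes "conf_max N \<sigma> \<le> w"
  shows "taller_columns N \<sigma> w = 0"
proof -
  have "\<not> w < \<sigma> i" if "i \<in> {1..N}" for i
    using le_conf_max[OF that, of \<sigma>] assms by linarith
  then have "{i \<in> {1..N}. w < \<sigma> i} = {}"
    by blast
  then show ?thesis by (simp add: taller_columns_def)
qed

lemma taller_columns_le_conf_size: "taller_columns N \<sigma> w \<le> conf_size N \<sigma>"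
proof -
  have "taller_columns N \<sigma> w = (\<Sum>i\<in>{i\<in>{1..N}. w < \<sigma> i}. 1)"
    by (simp add: taller_columns_def)
  also have "\<dots> \<le> (\<Sum>i\<in>{i\<in>{1..N}. w < \<sigma> i}. \<sigma> i)"
    by (intro sum_mono) auto
  also have "\<dots> \<le> (\<Sum>i=1..N. \<sigma> i)"
    by (intro sum_mono2) auto
  finally show ?thesis by (simp add: conf_size_def)
qed

lemma sum_double_Suc: "(\<Sum>w<m. 2 * (real w + 1)) = real m * (real m + 1)"
  by (induction m) (auto simp: algebra_simps)

lemma sum_taller_columns:
  assumes "\<And>j. j \<in> {1..N} \<Longrightarrow> \<sigma> j \<le> h"
  shows "(\<Sum>w<h. 2 * (real w + 1) * real (taller_columns N \<sigma> w))
       = (\<Sum>j=1..N. real (\<sigma> j) * (real (\<sigma> j) + 1))"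
proof -
  have count: "real (taller_columns N \<sigma> w) = (\<Sum>j=1..N. if w < \<sigma> j then 1 else 0)" for w
    by (simp add: taller_columns_def sum.inter_filter[symmetric])
  have "(\<Sum>w<h. 2 * (real w + 1) * real (taller_columns N \<sigma> w))
      = (\<Sum>w<h. \<Sum>j=1..N. if w < \<sigma> j then 2 * (real w + 1) else 0)"
    unfolding count by (simp add: sum_distrib_left if_distrib cong: if_cong)
  also have "\<dots> = (\<Sum>j=1..N. \<Sum>w<h. if w < \<sigma> j then 2 * (real w + 1) else 0)"
    by (rule sum.swap)
  also have "\<dots> = (\<Sum>j=1..N. \<Sum>w<\<sigma> j. 2 * (real w + 1))"
  proof (rule sum.cong[OF refl])
    fix j assume "j \<in> {1..N}"
    then have "{w\<in>{..<h}. w < \<sigma> j} = {..<\<sigma> j}" using assms by fastforce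
    then show "(\<Sum>w<h. if w < \<sigma> j then 2 * (real w + 1) else 0) = (\<Sum>w<\<sigma> j. 2 * (real w + 1))"
      by (simp add: sum.inter_filter[symmetric])
  qed
  also have "\<dots> = (\<Sum>j=1..N. real (\<sigma> j) * (real (\<sigma> j) + 1))"
    by (intro sum.cong refl) (rule sum_double_Suc)
  finally show ?thesis .
qed

definition attach_prob :: "nat \<Rightarrow> (nat \<Rightarrow> nat) \<Rightarrow> nat \<Rightarrow> real" where
  "attach_prob N \<sigma> w = real (taller_columns N \<sigma> w) / real N"

lemma attach_prob_le_conf_size: "attach_prob N \<sigma> w \<le> real (conf_size N \<sigma>) / real N"
  using taller_columns_le_conf_size[of N \<sigma> w] by (simp add: attach_prob_def divide_right_mono)

lemma sum_attach_ratio_le: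
  assumes small: "2 * real (conf_size N \<sigma>) < real N"
  shows "(\<Sum>w<conf_max N \<sigma>. 2 * (real w + 1) * (attach_prob N \<sigma> w / (1 - attach_prob N \<sigma> w)))
    \<le> 1 / real N * (\<Sum>j=1..N. real (\<sigma> j) * (real (\<sigma> j) + 1)) * (1 + 2 * real (conf_size N \<sigma>) / real N)"
proof -
  define t where "t = real (conf_size N \<sigma>) / real N"
  have "0 \<le> real (conf_size N \<sigma>)"
    by simp
  with small have N: "real N > 0"
    by linarith
  have t: "2 * t < 1"
    using small N by (simp add: t_def field_simps)
  have a_le_t: "attach_prob N \<sigma> w \<le> t" for w
    unfolding t_def by (rule attach_prob_le_conf_size)
  have "(\<Sum>w<conf_max N \<sigma>. 2 * (real w + 1) * (attach_prob N \<sigma> w / (1 - attach_prob N \<sigma> w)))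
      \<le> (\<Sum>w<conf_max N \<sigma>. 2 * (real w + 1) * (attach_prob N \<sigma> w * (1 + 2 * t)))"
    using a_le_t t by (intro sum_mono mult_left_mono divide_one_minus_le) (auto simp: attach_prob_def)
  also have "\<dots> = (1 + 2 * t) / real N * (\<Sum>w<conf_max N \<sigma>. 2 * (real w + 1) * real (taller_columns N \<sigma> w))"
    unfolding sum_distrib_left by (intro sum.cong) (simp_all add: attach_prob_def mult_ac)
  also have "\<dots> = (1 + 2 * t) / real N * (\<Sum>j=1..N. real (\<sigma> j) * (real (\<sigma> j) + 1))"
    by (rule arg_cong[OF sum_taller_columns]) (rule le_conf_max)
  also have "\<dots> = 1 / real N * (\<Sum>j=1..N. real (\<sigma> j) * (real (\<sigma> j) + 1)) * (1 + 2 * real (conf_size N \<sigma>) / real N)"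
    using N by (simp add: t_def field_simps)
  finally show ?thesis .
qed

section \<open>The explorer started at an arbitrary height\<close>

lemma ex_first_iff_Suc:
  "(\<exists>n. Q n \<and> (\<forall>k<n. \<not> Q k) \<and> R n) \<longleftrightarrow>
     (if Q 0 then R 0 else \<exists>n. Q (Suc n) \<and> (\<forall>k<n. \<not> Q (Suc k)) \<and> R (Suc n))"
  (is "?lhs \<longleftrightarrow> ?rhs")
proof
  assume ?lhs
  then obtain n where n: "Q n" "\<forall>k<n. \<not> Q k" "R n" by blast
  show ?rhs
  proof (cases n)
    case 0
    with n show ?thesis by simp
  next
    case (Suc m)
    with n show ?thesis by (auto intro!: exI[of _ m])
  qed
next
  assume rhs: ?rhs
  show ?lhs
  proof (cases "Q 0")
    case True
    with rhs show ?thesis by (intro exI[of _ 0]) simp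
  next
    case False
    with rhs obtain n where "Q (Suc n)" "\<forall>k<n. \<not> Q (Suc k)" "R (Suc n)" by auto
    with False show ?thesis by (intro exI[of _ "Suc n"]) (auto simp: less_Suc_eq_0_disj)
  qed
qed

lemma sum_list_map_stake: "sum_list (map f (stake n s)) = (\<Sum>k<n. f (s !! k))"
  unfolding sum_list_sum_nth atLeast0LessThan by (intro sum.cong) auto

lemma pred_stake:
  fixes p :: "'a::countable pmf"
  shows "Measurable.pred (stream_space (measure_pmf p)) (\<lambda>s. P (stake n s))"
proof -
  have "stake n \<in> stream_space (count_space UNIV) \<rightarrow>\<^sub>M count_space (UNIV :: 'a list set)"
    by (rule measurable_stake)
  then have "stake n \<in> stream_space (measure_pmf p) \<rightarrow>\<^sub>M count_space (UNIV :: 'a list set)"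
    by (simp add: measurable_cong_sets[OF sets_stream_space_cong[OF sets_measure_pmf_count_space] refl])
  then show ?thesis by (rule measurable_compose) simp
qed

definition walk_height :: "int \<Rightarrow> (nat \<times> int) stream \<Rightarrow> nat \<Rightarrow> int" where
  "walk_height z s n = z + (\<Sum>k<n. snd (s !! k))"

definition hits_ground_from :: "(nat \<Rightarrow> nat) \<Rightarrow> int \<Rightarrow> (nat \<times> int) stream \<Rightarrow> bool" where
  "hits_ground_from \<sigma> z s \<longleftrightarrow>
     (\<exists>n. walk_height z s n \<le> int (\<sigma> (fst (s !! n)))
        \<and> (\<forall>k<n. \<not> walk_height z s k \<le> int (\<sigma> (fst (s !! k)))) \<and> walk_height z s n = 0)"

lemma walk_height_0 [simp]: "walk_height z s 0 = z"
  by (simp add: walk_height_def)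

lemma walk_height_Cons_Suc: "walk_height z (x ## s) (Suc n) = walk_height (z + snd x) s n"
  unfolding walk_height_def sum.lessThan_Suc_shift by simp

lemma hits_ground_from_Cons:
  "hits_ground_from \<sigma> z (x ## s) \<longleftrightarrow>
     (if z \<le> int (\<sigma> (fst x)) then z = 0 else hits_ground_from \<sigma> (z + snd x) s)"
  unfolding hits_ground_from_def by (subst ex_first_iff_Suc) (simp add: walk_height_Cons_Suc)

lemma hits_ground_eq_hits_ground_from:
  "hits_ground N \<sigma> = hits_ground_from \<sigma> (int (conf_max N \<sigma>) + 1)"
  unfolding hits_ground_def hits_ground_from_def walk_height_def expl_Z_def expl_X_def
  by (simp add: not_le)

lemma measurable_hits_ground_from:
  "Measurable.pred (stream_space (measure_pmf p)) (hits_ground_from \<sigma> z)"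
proof -
  define hit_at :: "nat \<Rightarrow> (nat \<times> int) list \<Rightarrow> bool" where
    "hit_at n l \<longleftrightarrow> z + sum_list (map snd (take n l)) \<le> int (\<sigma> (fst (l ! n)))
       \<and> (\<forall>k<n. \<not> z + sum_list (map snd (take k l)) \<le> int (\<sigma> (fst (l ! k))))
       \<and> z + sum_list (map snd (take n l)) = 0" for n l
  have "hits_ground_from \<sigma> z = (\<lambda>s. \<exists>n. hit_at n (stake (Suc n) s))"
    unfolding hits_ground_from_def walk_height_def hit_at_def
    by (intro ext ex_cong1) (auto simp: take_stake min_def sum_list_map_stake simp del: stake.simps)
  then show ?thesis
    by (simp only:) (intro pred_intros_countable pred_stake)
qed

definition ground_prob :: "nat \<Rightarrow> (nat \<Rightarrow> nat) \<Rightarrow> int \<Rightarrow> real" where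
  "ground_prob N \<sigma> z =
     measure (explorer_space N) {s \<in> space (explorer_space N). hits_ground_from \<sigma> z s}"

lemma prob_space_explorer_space: "prob_space (explorer_space N)"
  unfolding explorer_space_def
  by (rule prob_space.prob_space_stream_space) (rule prob_space_measure_pmf)

lemma ground_prob_nonneg: "0 \<le> ground_prob N \<sigma> z"
  by (simp add: ground_prob_def)

lemma ground_prob_le_1: "ground_prob N \<sigma> z \<le> 1"
  unfolding ground_prob_def by (rule prob_space.prob_le_1[OF prob_space_explorer_space])

lemma P_g_eq_ground_prob: "P_g N \<sigma> = ground_prob N \<sigma> (int (conf_max N \<sigma>) + 1)"
  by (simp add: P_g_def ground_prob_def hits_ground_eq_hits_ground_from)

lemma set_pmf_step_pmf: "N \<ge> 1 \<Longrightarrow> set_pmf (step_pmf N) = {1..N} \<times> {-1, 1}"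
  by (simp add: step_pmf_def)

lemma integral_step_pmf:
  assumes "N \<ge> 1"
  shows "(\<integral>x. f x \<partial>measure_pmf (step_pmf N)) = (\<Sum>i=1..N. (f (i, -1) + f (i, 1)) / 2) / real N"
proof -
  have "(\<integral>x. f x \<partial>measure_pmf (step_pmf N)) = (\<Sum>x\<in>{1..N} \<times> {-1, 1}. pmf (step_pmf N) x * f x)"
    using assms by (subst integral_measure_pmf[where A = "{1..N} \<times> {-1, 1}"]) (auto simp: set_pmf_step_pmf)
  also have "\<dots> = (\<Sum>x\<in>{1..N} \<times> {-1, 1::int}. f x / (2 * real N))"
    using assms by (intro sum.cong) (auto simp: step_pmf_def pmf_pair)
  also have "\<dots> = (\<Sum>i=1..N. \<Sum>d\<in>{-1, 1::int}. f (i, d) / (2 * real N))"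
    by (subst sum.cartesian_product) (simp add: case_prod_beta')
  also have "\<dots> = (\<Sum>i=1..N. (f (i, -1) + f (i, 1)) / 2) / real N"
    by (simp add: sum_divide_distrib add_divide_distrib)
  finally show ?thesis .
qed

lemma ground_prob_first_step:
  assumes "N \<ge> 1"
  shows "ground_prob N \<sigma> z = (\<integral>t. (if z \<le> int (\<sigma> (fst t)) then (if z = 0 then 1 else 0)
                                      else ground_prob N \<sigma> (z + snd t)) \<partial>measure_pmf (step_pmf N))"
    (is "_ = (\<integral>t. ?g t \<partial>?M)")
proof -
  let ?S = "stream_space ?M"
  interpret S: prob_space ?S
    using prob_space_explorer_space by (simp add: explorer_space_def)
  have "ennreal (ground_prob N \<sigma> z) = (\<integral>\<^sup>+t. ennreal (S.prob {x\<in>space ?S. hits_ground_from \<sigma> z (t ## x)}) \<partial>?M)"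
    unfolding ground_prob_def explorer_space_def
    by (rule prob_space.prob_stream_space[OF prob_space_measure_pmf])
       (rule measurable_hits_ground_from[unfolded pred_def])
  also have "\<dots> = (\<integral>\<^sup>+t. ennreal (?g t) \<partial>?M)"
    by (intro nn_integral_cong)
       (auto simp: hits_ground_from_Cons ground_prob_def explorer_space_def S.prob_space)
  also have "\<dots> = ennreal (\<integral>t. ?g t \<partial>?M)"
    using assms
    by (intro nn_integral_eq_integral integrable_measure_pmf_finite AE_I2)
       (auto simp: set_pmf_step_pmf ground_prob_nonneg)
  finally show ?thesis
    by (subst (asm) ennreal_inj) (auto simp: ground_prob_nonneg intro!: integral_nonneg_AE AE_I2)
qed

lemma ground_prob_0: "N \<ge> 1 \<Longrightarrow> ground_prob N \<sigma> 0 = 1"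
  by (subst ground_prob_first_step) (simp_all add: integral_step_pmf)

lemma sum_if_zero_else_const:
  fixes c :: real
  assumes "finite I"
  shows "(\<Sum>i\<in>I. if P i then 0 else c) = (real (card I) - real (card {i\<in>I. P i})) * c"
proof -
  have "(\<Sum>i\<in>I. if P i then 0 else c) = (\<Sum>i\<in>I. c - (if P i then c else 0))"
    by (intro sum.cong) auto
  also have "\<dots> = real (card I) * c - real (card {i\<in>I. P i}) * c"
    using assms by (simp add: sum_subtractf sum.inter_filter[symmetric])
  finally show ?thesis by (simp add: algebra_simps)
qed

lemma ground_prob_Suc:
  assumes "N \<ge> 1"
  shows "ground_prob N \<sigma> (int (Suc n)) = (1 - real (taller_columns N \<sigma> n) / real N)
           * ((ground_prob N \<sigma> (int n) + ground_prob N \<sigma> (int (Suc (Suc n)))) / 2)"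
proof -
  define m where "m = (ground_prob N \<sigma> (int n) + ground_prob N \<sigma> (int (Suc (Suc n)))) / 2"
  have shift: "int (Suc n) - 1 = int n" "int (Suc n) + 1 = int (Suc (Suc n))"
    by simp_all
  have "ground_prob N \<sigma> (int (Suc n)) = (\<Sum>i=1..N. if n < \<sigma> i then 0 else m) / real N"
    by (subst ground_prob_first_step[OF assms], subst integral_step_pmf[OF assms])
       (intro arg_cong[where f = "\<lambda>x. x / real N"] sum.cong, auto simp: m_def shift simp del: of_nat_Suc)
  also have "\<dots> = (real N - real (taller_columns N \<sigma> n)) * m / real N"
    by (simp add: sum_if_zero_else_const taller_columns_def)
  finally show ?thesis
    using assms by (simp add: m_def field_simps)
qed

lemma P_g_ge_exp_attach_prob:
  assumes "N \<ge> 1" and "\<And>w. attach_prob N \<sigma> w < 1"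
  shows "exp (- (\<Sum>w<conf_max N \<sigma>. 2 * (real w + 1) * (attach_prob N \<sigma> w / (1 - attach_prob N \<sigma> w))))
           \<le> P_g N \<sigma>"
proof -
  define P where "P n = ground_prob N \<sigma> (int n)" for n
  have "exp (- (\<Sum>w<conf_max N \<sigma>. 2 * (real w + 1) * (attach_prob N \<sigma> w / (1 - attach_prob N \<sigma> w))))
          \<le> P (Suc (conf_max N \<sigma>))"
  proof (rule absorption_prob_lower_bound[where P = P and a = "attach_prob N \<sigma>"])
    show "0 \<le> P n \<and> P n \<le> 1" for n
      by (simp add: P_def ground_prob_nonneg ground_prob_le_1)
    show "P 0 = 1"
      using assms by (simp add: P_def ground_prob_0)
    show "P (Suc n) = (1 - attach_prob N \<sigma> n) * ((P n + P (Suc (Suc n))) / 2)" for n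
      unfolding P_def attach_prob_def by (rule ground_prob_Suc[OF assms(1)])
    show "0 \<le> attach_prob N \<sigma> n \<and> attach_prob N \<sigma> n < 1" for n
      using assms(2) by (simp add: attach_prob_def)
    show "attach_prob N \<sigma> n = 0" if "conf_max N \<sigma> \<le> n" for n
      using that by (simp add: attach_prob_def taller_columns_eq_0)
  qed
  also have "P (Suc (conf_max N \<sigma>)) = P_g N \<sigma>"
    by (simp add: P_def P_g_eq_ground_prob add.commute)
  finally show ?thesis .
qed

theorem lemma2p1:
  shows "\<exists>C::real. C > 0 \<and>
    (\<forall>N::nat. \<forall>\<sigma>::nat \<Rightarrow> nat. N \<ge> 2 \<longrightarrow> real (conf_size N \<sigma>) < real N / 2 \<longrightarrow>
      P_g N \<sigma> \<ge> exp (- (1 / real N) * (\<Sum>j=1..N. real (\<sigma> j) * (real (\<sigma> j) + 1))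
                        * (1 + C * real (conf_size N \<sigma>) / real N)))"
proof (intro exI[of _ 2] conjI allI impI)
  fix N :: nat and \<sigma> :: "nat \<Rightarrow> nat"
  assume "N \<ge> 2" and "real (conf_size N \<sigma>) < real N / 2"
  then have small: "2 * real (conf_size N \<sigma>) < real N" and N: "N \<ge> 1"
    by simp_all
  have "real (conf_size N \<sigma>) / real N < 1"
    using small N by (simp add: divide_less_eq)
  then have a_lt_1: "attach_prob N \<sigma> w < 1" for w
    by (rule order_le_less_trans[OF attach_prob_le_conf_size])
  have "exp (- (1 / real N * (\<Sum>j=1..N. real (\<sigma> j) * (real (\<sigma> j) + 1)) * (1 + 2 * real (conf_size N \<sigma>) / real N)))
      \<le> exp (- (\<Sum>w<conf_max N \<sigma>. 2 * (real w + 1) * (attach_prob N \<sigma> w / (1 - attach_prob N \<sigma> w))))"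
    using sum_attach_ratio_le[OF small] by (subst exp_le_cancel_iff) linarith
  also have "\<dots> \<le> P_g N \<sigma>"
    by (rule P_g_ge_exp_attach_prob[OF N a_lt_1])
  finally show "P_g N \<sigma> \<ge> exp (- (1 / real N) * (\<Sum>j=1..N. real (\<sigma> j) * (real (\<sigma> j) + 1))
                        * (1 + 2 * real (conf_size N \<sigma>) / real N))"
    by simp
qed simp

end
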